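(* Let $\mathcal{T}\in(\mathbb{R}^4)^{\otimes 4}$ be the symmetric tensor corresponding to the quartic $x^4-3y^4+12x^2yz+12xy^2w$ in the variables $x,y,z,w$. Then $\operatorname{drk}_2\mathcal{T}=\operatorname{sdrk}_2\mathcal{T}=9$.
   Context: All tensors are real. Symmetric tensors $\mathcal{T}\in(\mathbb{R}^I)^{\otimes d}$ correspond bijectively to homogeneous degree $d$ polynomials via $\mathcal{T}\leftrightarrow\sum_{k_1,\dots,k_d\in I}\mathcal{T}(k_1|\dots|k_d)x_{k_1}\cdots x_{k_d}$. For a symmetric $\mathcal{T}\in(\mathbb{R}^I)^{\otimes d}$ and $1\le j\le d$, the slice space $\mathcal{L}_j\subset(\mathbb{R}^I)^{\otimes j}$ is the linear span of all order $j$ slices obtained by fixing the last $d-j$ indices of $\mathcal{T}$ to arbitrary values. $\operatorname{drk}_j\mathcal{T}$ is the smallest $r$ such that there are $r$ decomposable tensors $v_1\otimes\cdots\otimes v_j$ whose linear span contains $\mathcal{L}_j$; $\operatorname{sdrk}_j\mathcal{T}$ is the smallest $r$ such that there are $r$ symmetric decomposable tensors $\lambda v^{\otimes j}$ whose linear span contains $\mathcal{L}_j$. *)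

theory Defs
  imports "HOL-Analysis.Analysis"
begin

text \<open>Order-4 tensors over R^I with I = the 4-element type '4 (elements 0,1,2,3
  standing for the variables x,y,z,w), represented as real^'4^'4^'4^'4;
  order-2 tensors in R^I (x) R^I are real^'4^'4.\<close>

type_synonym tensor4 = "real^4^4^4^4"
type_synonym tensor2 = "real^4^4"

definition entry4 :: "tensor4 \<Rightarrow> (nat \<Rightarrow> 4) \<Rightarrow> real" where
  "entry4 T k = T $ k 0 $ k 1 $ k 2 $ k 3"

definition symmetric4 :: "tensor4 \<Rightarrow> bool" where
  "symmetric4 T \<longleftrightarrow> (\<forall>k \<sigma>. \<sigma> permutes {0..<4} \<longrightarrow> entry4 T (k \<circ> \<sigma>) = entry4 T k)"

definition tensor_poly4 :: "tensor4 \<Rightarrow> real^4 \<Rightarrow> real" where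
  "tensor_poly4 T x = (\<Sum>a\<in>UNIV. \<Sum>b\<in>UNIV. \<Sum>c\<in>UNIV. \<Sum>d\<in>UNIV.
       T $ a $ b $ c $ d * x $ a * x $ b * x $ c * x $ d)"

definition slice_space2 :: "tensor4 \<Rightarrow> tensor2 set" where
  "slice_space2 T = span {(\<chi> a b. T $ a $ b $ c $ d) | c d. True}"

definition outer2 :: "real^4 \<Rightarrow> real^4 \<Rightarrow> tensor2" where
  "outer2 u v = (\<chi> a b. u $ a * v $ b)"

definition drk2 :: "tensor4 \<Rightarrow> nat" where
  "drk2 T = (LEAST r. \<exists>u v :: nat \<Rightarrow> real^4.
      slice_space2 T \<subseteq> span ((\<lambda>i. outer2 (u i) (v i)) ` {..<r}))"

definition sdrk2 :: "tensor4 \<Rightarrow> nat" where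
  "sdrk2 T = (LEAST r. \<exists>(c :: nat \<Rightarrow> real) (v :: nat \<Rightarrow> real^4).
      slice_space2 T \<subseteq> span ((\<lambda>i. c i *\<^sub>R outer2 (v i) (v i)) ` {..<r}))"

end

theory Submission
  imports Defs "HOL-Computational_Algebra.Polynomial"
begin

text \<open>A symmetric tensor is determined by its quartic form, so \<open>T\<close> is the explicit tensor
  of the quartic. Its order-2 slices span the six-dimensional space of matrices
  \<open>[[p, r, g, d], [r, q, e, g], [g, e, 0, 0], [d, g, 0, 0]]\<close>, which nine symmetric rank-one
  matrices span. If eight rank-one matrices spanned it, exchanging three of them for the
  units of the upper-left block would leave every off-diagonal block \<open>(d, e, g)\<close> in the span
  of four rank-one matrices \<open>R\<^sub>j\<close> plus one extra \<open>a b\<^sup>T\<close>. Combining three such matrices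
  yields an invertible \<open>M\<^sub>0\<close> and an \<open>M\<^sub>1\<close> in the span of the \<open>R\<^sub>j\<close>; four rank-one
  matrices spanning an invertible one are simultaneously diagonalised by \<open>M\<^sub>0\<^sup>-\<^sup>1\<close>, and
  testing the resulting commutation on a vector that kills \<open>a b\<^sup>T\<close> gives a \<open>2 \<times> 2\<close>-block
  system with determinant \<open>-\<Delta>\<^sup>2 \<noteq> 0\<close>, a contradiction.\<close>

text \<open>Zero-based versions of \<open>sum_4\<close> and \<open>forall_4\<close>: the variables \<open>x, y, z, w\<close> are the
  indices \<open>0, 1, 2, 3\<close> of type \<open>4\<close>, in which \<open>4 = 0\<close>.\<close>

lemma four_eq_zero: "(4 :: 4) = 0"
  by simp

lemma sum_4': "sum f (UNIV :: 4 set) = f 0 + f 1 + f 2 + f 3"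
  by (simp add: sum_4 four_eq_zero ac_simps)

lemma forall_4': "(\<forall>i::4. P i) \<longleftrightarrow> P 0 \<and> P 1 \<and> P 2 \<and> P 3"
  by (auto simp: forall_4 four_eq_zero)

section \<open>A symmetric tensor is determined by its quartic\<close>

lemma symmetric4_entry_eq:
  assumes "symmetric4 T" and "mset [a, b, c, d] = mset [a', b', c', d']"
  shows "T $ a $ b $ c $ d = T $ a' $ b' $ c' $ d'"
proof -
  obtain p where p: "p permutes {..<length [a, b, c, d]}" "permute_list p [a, b, c, d] = [a', b', c', d']"
    by (rule mset_eq_permutation[OF assms(2)[symmetric]])
  define k where "k n = [a, b, c, d] ! n" for n
  have k_p: "k (p n) = [a', b', c', d'] ! n" if "n < 4" for n
    using permute_list_nth[OF p(1), of n] p(2) that by (simp add: k_def)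
  have "p permutes {0..<4}"
    using p(1) by (simp add: atLeast0LessThan numeral_eq_Suc)
  hence "entry4 T (k \<circ> p) = entry4 T k"
    using assms(1) unfolding symmetric4_def by blast
  thus ?thesis
    unfolding entry4_def comp_def using k_p[of 0] k_p[of 1] k_p[of 2] k_p[of 3] by (simp add: k_def)
qed

text \<open>Along the curve \<open>t \<mapsto> (t, t\<^sup>5, t\<^sup>2\<^sup>5, t\<^sup>1\<^sup>2\<^sup>5)\<close> the monomial
  \<open>x\<^sub>a x\<^sub>b x\<^sub>c x\<^sub>d\<close> becomes \<open>t\<^sup>n\<close>, where the base-5 digits of \<open>n\<close> are the
  multiplicities of the variables; so distinct monomials give distinct powers of \<open>t\<close>.\<close>

definition moment_exponent :: "4 \<Rightarrow> nat" where
  "moment_exponent i = (if i = 0 then 1 else if i = 1 then 5 else if i = 2 then 25 else 125)"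

lemma moment_exponent_sum_count:
  "moment_exponent a + moment_exponent b + moment_exponent c + moment_exponent d =
     (\<Sum>i\<in>UNIV. count (mset [a, b, c, d]) i * moment_exponent i)"
proof -
  let ?e = moment_exponent
  have "count (mset [a, b, c, d]) i * ?e i = (if i = a then ?e i else 0) + (if i = b then ?e i else 0)
      + (if i = c then ?e i else 0) + (if i = d then ?e i else 0)" for i
    by auto
  thus ?thesis
    by (simp add: sum.distrib)
qed

lemma digit_expansion_unique:
  fixes a b x y m :: nat
  assumes "a + m * x = b + m * y" "a < m" "b < m"
  shows "a = b \<and> x = y"
proof -
  have "a = (a + m * x) mod m" "b = (b + m * y) mod m"
    using assms(2,3) by simp_all
  moreover have "x = (a + m * x) div m" "y = (b + m * y) div m"
    using assms(2,3) by simp_all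
  ultimately show ?thesis
    using assms(1) by metis
qed

lemma moment_exponent_determines_mset:
  assumes "moment_exponent a + moment_exponent b + moment_exponent c + moment_exponent d =
           moment_exponent a' + moment_exponent b' + moment_exponent c' + moment_exponent d'"
  shows "mset [a, b, c, d] = mset [a', b', c', d']"
proof -
  let ?n = "count (mset [a, b, c, d])" and ?m = "count (mset [a', b', c', d'])"
  have small: "?n i < 5" "?m i < 5" for i
    using count_le_size[of "mset [a, b, c, d]" i] count_le_size[of "mset [a', b', c', d']" i]
    by simp_all
  have "?n 0 + 5 * (?n 1 + 5 * (?n 2 + 5 * ?n 3)) = ?m 0 + 5 * (?m 1 + 5 * (?m 2 + 5 * ?m 3))"
    using assms unfolding moment_exponent_sum_count sum_4' by (simp add: moment_exponent_def)
  from digit_expansion_unique[OF this small]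
  have 0: "?n 0 = ?m 0" and "?n 1 + 5 * (?n 2 + 5 * ?n 3) = ?m 1 + 5 * (?m 2 + 5 * ?m 3)"
    by auto
  from digit_expansion_unique[OF this(2) small]
  have 1: "?n 1 = ?m 1" and "?n 2 + 5 * ?n 3 = ?m 2 + 5 * ?m 3"
    by auto
  from digit_expansion_unique[OF this(2) small]
  have "?n 2 = ?m 2" "?n 3 = ?m 3"
    by auto
  with 0 1 have "\<forall>i. ?n i = ?m i"
    unfolding forall_4' by blast
  thus ?thesis
    by (blast intro: multiset_eqI)
qed

lemma tensor_poly4_moment_curve:
  "tensor_poly4 S (\<chi> i. t ^ moment_exponent i) =
     poly (\<Sum>(a, b, c, d)\<in>UNIV. monom (S $ a $ b $ c $ d)
       (moment_exponent a + moment_exponent b + moment_exponent c + moment_exponent d)) t"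
  unfolding tensor_poly4_def poly_sum
  by (simp add: sum.cartesian_product case_prod_unfold poly_monom power_add mult_ac)

lemma symmetric4_quartic_eq_0:
  assumes sym: "symmetric4 S" and zero: "\<And>x. tensor_poly4 S x = 0"
  shows "S = 0"
proof -
  define wt :: "4 \<times> 4 \<times> 4 \<times> 4 \<Rightarrow> nat" where
    "wt = (\<lambda>(a, b, c, d). moment_exponent a + moment_exponent b + moment_exponent c + moment_exponent d)"
  define p where "p = (\<Sum>(a, b, c, d)\<in>UNIV. monom (S $ a $ b $ c $ d) (wt (a, b, c, d)))"
  have "poly p t = 0" for t
    using zero[of "\<chi> i. t ^ moment_exponent i"] by (simp add: tensor_poly4_moment_curve p_def wt_def)
  hence "p = 0"
    using poly_all_0_iff_0 by blast
  have entry_0: "S $ a $ b $ c $ d = 0" for a b c d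
  proof -
    let ?C = "{\<tau>. wt \<tau> = wt (a, b, c, d)}"
    have "0 = coeff p (wt (a, b, c, d))"
      using \<open>p = 0\<close> by simp
    also have "\<dots> = (\<Sum>\<tau>\<in>?C. case \<tau> of (a', b', c', d') \<Rightarrow> S $ a' $ b' $ c' $ d')"
      unfolding p_def coeff_sum by (simp add: coeff_monom case_prod_unfold if_distrib sum.If_cases)
    also have "\<dots> = (\<Sum>\<tau>\<in>?C. S $ a $ b $ c $ d)"
      by (rule sum.cong)
        (auto simp: wt_def intro!: symmetric4_entry_eq[OF sym] moment_exponent_determines_mset)
    also have "\<dots> = real (card ?C) * S $ a $ b $ c $ d"
      by simp
    finally show ?thesis
      using card_gt_0_iff[of ?C] by auto
  qed
  show ?thesis
    by (simp add: vec_eq_iff entry_0)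
qed

lemma symmetric4_diff: "symmetric4 S \<Longrightarrow> symmetric4 T \<Longrightarrow> symmetric4 (S - T)"
  unfolding symmetric4_def entry4_def by simp

lemma tensor_poly4_diff: "tensor_poly4 (S - T) x = tensor_poly4 S x - tensor_poly4 T x"
  unfolding tensor_poly4_def by (simp add: left_diff_distrib sum_subtractf)

lemma symmetric4_eqI:
  assumes "symmetric4 S" and "symmetric4 T" and "\<And>x. tensor_poly4 S x = tensor_poly4 T x"
  shows "S = T"
  using symmetric4_quartic_eq_0[of "S - T"] assms by (simp add: symmetric4_diff tensor_poly4_diff)

section \<open>The tensor of the quartic and its slices\<close>

definition mset_tensor4 :: "(4 multiset \<Rightarrow> real) \<Rightarrow> tensor4" where
  "mset_tensor4 f = (\<chi> a b c d. f {#a, b, c, d#})"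

lemma mset_map_upt_4: "mset (map g [0..<4]) = {#g 0, g 1, g 2, g 3#}"
  by (simp add: upt_rec eval_nat_numeral)

lemma symmetric4_mset_tensor4: "symmetric4 (mset_tensor4 f)"
  unfolding symmetric4_def
proof (intro allI impI)
  fix k :: "nat \<Rightarrow> 4" and \<sigma> :: "nat \<Rightarrow> nat"
  assume "\<sigma> permutes {0..<4}"
  hence \<sigma>: "image_mset \<sigma> (mset [0..<4]) = mset [0..<4]"
    by (simp only: mset_upt permutes_image_mset)
  have "mset (map (k \<circ> \<sigma>) [0..<4]) = image_mset k (image_mset \<sigma> (mset [0..<4]))"
    by (simp only: mset_map multiset.map_comp)
  also have "\<dots> = mset (map k [0..<4])"
    by (simp only: \<sigma> mset_map)
  finally have "{#k (\<sigma> 0), k (\<sigma> 1), k (\<sigma> 2), k (\<sigma> 3)#} = {#k 0, k 1, k 2, k 3#}"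
    unfolding mset_map_upt_4 o_apply .
  thus "entry4 (mset_tensor4 f) (k \<circ> \<sigma>) = entry4 (mset_tensor4 f) k"
    by (simp add: entry4_def mset_tensor4_def)
qed

lemma mset_tensor4_nth [simp]: "mset_tensor4 f $ a $ b $ c $ d = f {#a, b, c, d#}"
  by (simp add: mset_tensor4_def)

text \<open>The coefficients of \<open>x\<^sup>4 - 3y\<^sup>4 + 12x\<^sup>2yz + 12xy\<^sup>2w\<close> divided by the number of
  orderings of each monomial; \<open>count M i\<close> is the exponent of the \<open>i\<close>-th variable.\<close>

definition quartic_coeff :: "4 multiset \<Rightarrow> real" where
  "quartic_coeff M = of_bool (count M 0 = 4) - 3 * of_bool (count M 1 = 4)
     + of_bool (count M 0 = 2 \<and> count M 1 = 1 \<and> count M 2 = 1)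
     + of_bool (count M 0 = 1 \<and> count M 1 = 2 \<and> count M 3 = 1)"

definition quartic_tensor :: tensor4 where
  "quartic_tensor = mset_tensor4 quartic_coeff"

lemma tensor_poly4_quartic_tensor:
  "tensor_poly4 quartic_tensor x =
     (x$0)^4 - 3 * (x$1)^4 + 12 * (x$0)^2 * (x$1) * (x$2) + 12 * (x$0) * (x$1)^2 * (x$3)"
  unfolding tensor_poly4_def sum_4'
  by (simp add: quartic_tensor_def quartic_coeff_def)
    (simp add: algebra_simps power4_eq_xxxx power2_eq_square)

lemma symmetric4_quartic_tensor: "symmetric4 quartic_tensor"
  by (simp add: quartic_tensor_def symmetric4_mset_tensor4)

definition slice_mat :: "real \<Rightarrow> real \<Rightarrow> real \<Rightarrow> real \<Rightarrow> real \<Rightarrow> real \<Rightarrow> tensor2" where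
  "slice_mat p q r d e g = (\<chi> i j.
     if i = 0 then (if j = 0 then p else if j = 1 then r else if j = 2 then g else d)
     else if i = 1 then (if j = 0 then r else if j = 1 then q else if j = 2 then e else g)
     else if i = 2 then (if j = 0 then g else if j = 1 then e else 0)
     else (if j = 0 then d else if j = 1 then g else 0))"

definition slice_mats :: "tensor2 set" where
  "slice_mats = {slice_mat p q r d e g | p q r d e g. True}"

lemma slice_mat_mult_vec:
  "(slice_mat p q r d e g *v x) $ 0 = p * x$0 + r * x$1 + g * x$2 + d * x$3"
  "(slice_mat p q r d e g *v x) $ 1 = r * x$0 + q * x$1 + e * x$2 + g * x$3"
  "(slice_mat p q r d e g *v x) $ 2 = g * x$0 + e * x$1"
  "(slice_mat p q r d e g *v x) $ 3 = d * x$0 + g * x$1"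
  by (simp_all add: slice_mat_def matrix_vector_mult_def sum_4')

lemma slice_mat_add:
  "slice_mat p q r d e g + slice_mat p' q' r' d' e' g' =
     slice_mat (p + p') (q + q') (r + r') (d + d') (e + e') (g + g')"
  by (simp add: slice_mat_def vec_eq_iff forall_4')

lemma scaleR_slice_mat:
  "c *\<^sub>R slice_mat p q r d e g = slice_mat (c * p) (c * q) (c * r) (c * d) (c * e) (c * g)"
  by (simp add: slice_mat_def vec_eq_iff forall_4')

lemma slice_mat_diff:
  "slice_mat p q r d e g - slice_mat p' q' r' d' e' g' =
     slice_mat (p - p') (q - q') (r - r') (d - d') (e - e') (g - g')"
  by (simp add: slice_mat_def vec_eq_iff forall_4')

lemma slice_mat_eq_0_iff:
  "slice_mat p q r d e g = 0 \<longleftrightarrow> p = 0 \<and> q = 0 \<and> r = 0 \<and> d = 0 \<and> e = 0 \<and> g = 0"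
  by (auto simp: slice_mat_def vec_eq_iff forall_4')

lemma slice_mat_inject:
  "slice_mat p q r d e g = slice_mat p' q' r' d' e' g' \<longleftrightarrow>
     p = p' \<and> q = q' \<and> r = r' \<and> d = d' \<and> e = e' \<and> g = g'"
  using slice_mat_eq_0_iff[of "p - p'" "q - q'" "r - r'" "d - d'" "e - e'" "g - g'"]
  by (auto simp: slice_mat_diff[symmetric])

lemma slice_mat_in_slice_mats: "slice_mat p q r d e g \<in> slice_mats"
  unfolding slice_mats_def by blast

lemma subspace_slice_mats: "subspace slice_mats"
  unfolding subspace_def slice_mats_def
  by (auto simp: slice_mat_add scaleR_slice_mat slice_mat_eq_0_iff) blast+

lemma slice_matsI:
  assumes "M $ 2 $ 2 = 0" "M $ 2 $ 3 = 0" "M $ 3 $ 2 = 0" "M $ 3 $ 3 = 0"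
    and "M $ 1 $ 0 = M $ 0 $ 1" "M $ 2 $ 0 = M $ 0 $ 2" "M $ 3 $ 0 = M $ 0 $ 3" "M $ 2 $ 1 = M $ 1 $ 2"
    and "M $ 1 $ 3 = M $ 0 $ 2" "M $ 3 $ 1 = M $ 0 $ 2"
  shows "M \<in> slice_mats"
proof -
  have "M = slice_mat (M $ 0 $ 0) (M $ 1 $ 1) (M $ 0 $ 1) (M $ 0 $ 3) (M $ 1 $ 2) (M $ 0 $ 2)"
    using assms by (simp add: vec_eq_iff forall_4' slice_mat_def)
  thus ?thesis
    unfolding slice_mats_def by blast
qed

lemma slice_space2_quartic_tensor: "slice_space2 quartic_tensor = slice_mats"
proof -
  let ?S = "\<lambda>c d. \<chi> a b. quartic_tensor $ a $ b $ c $ d"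
  have "?S c d \<in> slice_mats" for c d
    by (rule slice_matsI) (simp_all add: quartic_tensor_def quartic_coeff_def add_mset_commute)
  hence "{?S c d | c d. True} \<subseteq> slice_mats"
    by blast
  hence "slice_space2 quartic_tensor \<subseteq> slice_mats"
    unfolding slice_space2_def by (rule span_minimal[OF _ subspace_slice_mats])
  moreover have "slice_mats \<subseteq> slice_space2 quartic_tensor"
  proof
    fix M assume "M \<in> slice_mats"
    then obtain p q r d e g where M: "M = slice_mat p q r d e g"
      by (auto simp: slice_mats_def)
    have slice: "?S c d \<in> slice_space2 quartic_tensor" for c d
      unfolding slice_space2_def by (rule span_base) blast
    have "M = (p - e) *\<^sub>R ?S 1 2 + (q + 3 * d) *\<^sub>R ?S 0 3 + r *\<^sub>R ?S 0 2
        + d *\<^sub>R ?S 1 1 + e *\<^sub>R ?S 0 0 + g *\<^sub>R ?S 0 1"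
      unfolding M vec_eq_iff forall_4'
      by (simp add: slice_mat_def quartic_tensor_def quartic_coeff_def)
    also have "\<dots> \<in> slice_space2 quartic_tensor"
      unfolding slice_space2_def by (intro span_add span_scale slice[unfolded slice_space2_def])
    finally show "M \<in> slice_space2 quartic_tensor" .
  qed
  ultimately show ?thesis
    by (rule antisym)
qed

definition vec4 :: "real \<Rightarrow> real \<Rightarrow> real \<Rightarrow> real \<Rightarrow> real^4" where
  "vec4 a b c d = (\<chi> i. if i = 0 then a else if i = 1 then b else if i = 2 then c else d)"

definition square_vec :: "nat \<Rightarrow> real^4" where
  "square_vec i = [vec4 1 0 0 0, vec4 0 1 0 0, vec4 1 1 0 0, vec4 1 0 0 1, vec4 1 0 0 (-1),
     vec4 0 1 1 0, vec4 0 1 (-1) 0, vec4 1 1 1 1, vec4 1 (-1) 1 (-1)] ! i"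

lemma slice_mats_subset_span_squares:
  "slice_mats \<subseteq> span ((\<lambda>i. outer2 (square_vec i) (square_vec i)) ` {..<9})"
proof
  fix M assume "M \<in> slice_mats"
  then obtain p q r d e g where M: "M = slice_mat p q r d e g"
    by (auto simp: slice_mats_def)
  define Q where "Q i = outer2 (square_vec i) (square_vec i)" for i
  have Q: "Q i \<in> span (Q ` {..<9})" if "i < 9" for i
    using that by (intro span_base) auto
  have "M = (p - r) *\<^sub>R Q 0 + (q - r) *\<^sub>R Q 1 + r *\<^sub>R Q 2
      + ((d - g) / 2) *\<^sub>R Q 3 + ((- d - g) / 2) *\<^sub>R Q 4 + ((e - g) / 2) *\<^sub>R Q 5
      + ((- e - g) / 2) *\<^sub>R Q 6 + (g / 2) *\<^sub>R Q 7 + (g / 2) *\<^sub>R Q 8"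
    unfolding M vec_eq_iff forall_4'
    by (simp add: slice_mat_def outer2_def square_vec_def vec4_def Q_def field_simps)
  also have "\<dots> \<in> span (Q ` {..<9})"
    by (intro span_add span_scale Q) auto
  finally show "M \<in> span ((\<lambda>i. outer2 (square_vec i) (square_vec i)) ` {..<9})"
    by (simp add: Q_def)
qed

section \<open>Spans of rank-one matrices\<close>

lemma sum_scaleR_delta:
  fixes f :: "'i \<Rightarrow> 'a::real_vector"
  assumes "finite I" and "j \<in> I"
  shows "(\<Sum>i\<in>I. (if i = j then c else 0) *\<^sub>R f i) = c *\<^sub>R f j"
proof -
  have "(\<Sum>i\<in>I. (if i = j then c else 0) *\<^sub>R f i) = (\<Sum>i\<in>I. if i = j then c *\<^sub>R f i else 0)"
    by (rule sum.cong) auto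
  thus ?thesis
    using assms by simp
qed

lemma span_image_eq_sum:
  assumes "finite I"
  shows "x \<in> span (f ` I) \<longleftrightarrow> (\<exists>c. x = (\<Sum>i\<in>I. c i *\<^sub>R f i))"
proof
  assume "x \<in> span (f ` I)"
  thus "\<exists>c. x = (\<Sum>i\<in>I. c i *\<^sub>R f i)"
  proof (induction rule: span_induct_alt)
    case base
    show ?case by (intro exI[of _ "\<lambda>_. 0"]) simp
  next
    case (step k y z)
    then obtain i c where i: "i \<in> I" "y = f i" and z: "z = (\<Sum>j\<in>I. c j *\<^sub>R f j)"
      by blast
    have "k *\<^sub>R y = (\<Sum>j\<in>I. (if j = i then k else 0) *\<^sub>R f j)"
      by (simp add: sum_scaleR_delta[OF assms i(1)] i(2))
    hence "k *\<^sub>R y + z = (\<Sum>j\<in>I. (c j + (if j = i then k else 0)) *\<^sub>R f j)"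
      by (simp add: z scaleR_add_left sum.distrib)
    thus ?case
      by (rule exI[of _ "\<lambda>j. c j + (if j = i then k else 0)"])
  qed
next
  assume "\<exists>c. x = (\<Sum>i\<in>I. c i *\<^sub>R f i)"
  then obtain c where "x = (\<Sum>i\<in>I. c i *\<^sub>R f i)"
    by blast
  thus "x \<in> span (f ` I)"
    by (simp add: span_sum span_scale span_base)
qed

lemma span_exchange:
  assumes I: "finite I" and x: "x \<in> span (B \<union> f ` I)" and x_notin: "x \<notin> span B"
  obtains i where "i \<in> I" and "span (B \<union> f ` I) \<subseteq> span (insert x (B \<union> f ` (I - {i})))"
proof -
  obtain b y where b: "b \<in> span B" and y: "y \<in> span (f ` I)" and xby: "x = b + y"
    using x by (auto simp: span_Un)
  obtain c where c: "y = (\<Sum>j\<in>I. c j *\<^sub>R f j)"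
    using y span_image_eq_sum[OF I] by blast
  have "y \<noteq> 0"
    using x_notin b xby by auto
  then obtain i where i: "i \<in> I" "c i \<noteq> 0"
    unfolding c by (metis (no_types, lifting) scaleR_zero_left sum.neutral)
  let ?S = "span (insert x (B \<union> f ` (I - {i})))"
  have rest: "(\<Sum>j\<in>I - {i}. c j *\<^sub>R f j) \<in> ?S"
    by (intro span_sum span_scale span_base) auto
  have "b \<in> ?S" "x \<in> ?S"
    using b span_mono[of B "insert x (B \<union> f ` (I - {i}))"] by (auto intro: span_base)
  hence "(1 / c i) *\<^sub>R (x - b - (\<Sum>j\<in>I - {i}. c j *\<^sub>R f j)) \<in> ?S"
    using rest by (intro span_scale span_diff)
  also have "(1 / c i) *\<^sub>R (x - b - (\<Sum>j\<in>I - {i}. c j *\<^sub>R f j)) = f i"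
    using i I by (simp add: xby c sum.remove)
  finally have "f i \<in> ?S" .
  hence "B \<union> f ` I \<subseteq> ?S"
    by (auto intro: span_base)
  hence "span (B \<union> f ` I) \<subseteq> ?S"
    by (simp add: span_minimal)
  with i(1) show thesis by (rule that)
qed

lemma span_exchange_independent:
  assumes "finite I" and "finite S" and "independent S" and "S \<subseteq> span (f ` I)"
  shows "\<exists>I' \<subseteq> I. card I' + card S \<le> card I \<and> span (f ` I) \<subseteq> span (S \<union> f ` I')"
  using assms(2-4)
proof (induction S rule: finite_induct)
  case empty
  show ?case by (intro exI[of _ I]) simp
next
  case (insert x S)
  have "independent S"
    by (rule independent_mono[OF insert.prems(1)]) auto
  with insert.prems(2) obtain I' where
    I': "I' \<subseteq> I" "card I' + card S \<le> card I" "span (f ` I) \<subseteq> span (S \<union> f ` I')"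
    using insert.IH by auto
  have fin: "finite I'"
    using I'(1) assms(1) finite_subset by blast
  have "x \<in> span (S \<union> f ` I')"
    using insert.prems(2) I'(3) by auto
  moreover have "x \<notin> span S"
    using insert.prems(1) insert.hyps(2) by (simp add: independent_insert)
  ultimately obtain i where i: "i \<in> I'"
    and sub: "span (S \<union> f ` I') \<subseteq> span (insert x (S \<union> f ` (I' - {i})))"
    by (rule span_exchange[OF fin])
  have "card I' > 0"
    using i fin card_gt_0_iff by blast
  hence "card (I' - {i}) + card (insert x S) \<le> card I"
    using I'(2) i fin insert.hyps by (simp add: card_Diff_singleton)
  moreover have "span (f ` I) \<subseteq> span (insert x S \<union> f ` (I' - {i}))"
    using I'(3) sub by auto
  ultimately show ?case
    using I'(1) by blast
qed

lemma outer2_mult_vec: "outer2 u v *v x = (v \<bullet> x) *\<^sub>R u"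
  by (auto simp: vec_eq_iff outer2_def matrix_vector_mult_def inner_vec_def sum_distrib_right
      intro!: sum.cong)

lemma scaleR_outer2: "c *\<^sub>R outer2 u v = outer2 (c *\<^sub>R u) v"
  by (simp add: outer2_def vec_eq_iff)

lemma sum_outer2_mult_vec:
  "(\<Sum>i\<in>I. c i *\<^sub>R outer2 (u i) (v i)) *v x = (\<Sum>i\<in>I. (c i * (v i \<bullet> x)) *\<^sub>R u i)"
  by (induction I rule: infinite_finite_induct)
    (simp_all add: matrix_vector_mult_add_rdistrib scaleR_outer2 outer2_mult_vec)

lemma spanning_family_coeffs_zero:
  fixes u :: "'i \<Rightarrow> 'a::euclidean_space"
  assumes fin: "finite J" and card: "card J \<le> DIM('a)" and span: "span (u ` J) = UNIV"
    and sum: "(\<Sum>j\<in>J. c j *\<^sub>R u j) = 0" and j: "j \<in> J"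
  shows "c j = 0"
proof -
  have "DIM('a) \<le> card (u ` J)"
    using span_card_ge_dim[of "u ` J" UNIV] span fin by auto
  hence card_image: "card (u ` J) = card J"
    using card_image_le[OF fin, of u] card by linarith
  hence inj: "inj_on u J"
    using eq_card_imp_inj_on fin by blast
  have indep: "independent (u ` J)"
    using card_le_dim_spanning[of "u ` J" UNIV] span fin card_image card by auto
  have "(\<Sum>w\<in>u ` J. c (the_inv_into J u w) *\<^sub>R w) = (\<Sum>j\<in>J. c j *\<^sub>R u j)"
    by (simp add: sum.reindex[OF inj] the_inv_into_f_f[OF inj])
  hence "\<forall>w\<in>u ` J. c (the_inv_into J u w) = 0"
    using indep dependent_finite[of "u ` J"] fin sum by auto
  thus ?thesis
    using j by (simp add: the_inv_into_f_f[OF inj])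
qed

text \<open>If an invertible \<open>M = \<Sum> a\<^sub>j u\<^sub>j v\<^sub>j\<^sup>T\<close> uses at most four rank-one terms, the
  \<open>u\<^sub>j\<close> form a basis, and \<open>M (M\<^sup>-\<^sup>1 u\<^sub>j) = u\<^sub>j\<close> forces \<open>a\<^sub>i (v\<^sub>i \<bullet> M\<^sup>-\<^sup>1 u\<^sub>j) = \<delta>\<^sub>i\<^sub>j\<close>.\<close>

lemma rank_one_span_inverse_orthogonal:
  fixes u v :: "'i \<Rightarrow> real^4"
  assumes fin: "finite J" and card: "card J \<le> 4"
    and M: "M \<in> span ((\<lambda>i. outer2 (u i) (v i)) ` J)" and G: "G ** M = mat 1"
    and ij: "i \<in> J" "j \<in> J" "i \<noteq> j"
  shows "v i \<bullet> (G *v u j) = 0"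
proof -
  have "M ** G = mat 1"
    using G matrix_left_right_inverse by blast
  hence M_G: "M *v (G *v y) = y" for y
    by (simp add: matrix_vector_mul_assoc)
  obtain a where "M = (\<Sum>j\<in>J. a j *\<^sub>R outer2 (u j) (v j))"
    using M span_image_eq_sum[OF fin, of M "\<lambda>i. outer2 (u i) (v i)"] by blast
  hence M_apply: "M *v x = (\<Sum>j\<in>J. (a j * (v j \<bullet> x)) *\<^sub>R u j)" for x
    by (simp add: sum_outer2_mult_vec)
  have "y \<in> span (u ` J)" for y
  proof -
    have "y = (\<Sum>j\<in>J. (a j * (v j \<bullet> (G *v y))) *\<^sub>R u j)"
      using M_G[of y] by (simp add: M_apply)
    also have "\<dots> \<in> span (u ` J)"
      by (intro span_sum span_scale span_base imageI)
    finally show ?thesis .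
  qed
  hence span: "span (u ` J) = UNIV"
    by auto
  have dual: "a k * (v k \<bullet> (G *v u l)) = (if k = l then 1 else 0)" if "k \<in> J" "l \<in> J" for k l
  proof -
    have "(\<Sum>k\<in>J. (a k * (v k \<bullet> (G *v u l))) *\<^sub>R u k) = u l"
      using M_G[of "u l"] by (simp add: M_apply)
    hence "(\<Sum>k\<in>J. (a k * (v k \<bullet> (G *v u l)) - (if k = l then 1 else 0)) *\<^sub>R u k) = 0"
      using sum_scaleR_delta[OF fin that(2), of 1 u] by (simp add: scaleR_left_diff_distrib sum_subtractf)
    from spanning_family_coeffs_zero[OF fin _ span this that(1)] card show ?thesis
      by simp
  qed
  have "a i \<noteq> 0"
    using dual[OF ij(1) ij(1)] by auto
  with dual[OF ij(1,2)] ij(3) show ?thesis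
    by simp
qed

lemma rank_one_span_commute:
  fixes u v :: "'i \<Rightarrow> real^4"
  defines "R \<equiv> \<lambda>i. outer2 (u i) (v i)"
  assumes fin: "finite J" and card: "card J \<le> 4"
    and M: "M \<in> span (R ` J)" and G: "G ** M = mat 1"
    and X: "X \<in> span (R ` J)" and Y: "Y \<in> span (R ` J)"
  shows "X ** G ** Y = Y ** G ** X"
proof -
  note orth = rank_one_span_inverse_orthogonal[OF fin card M[unfolded R_def] G]
  have inner: "v i \<bullet> (G *v (\<Sum>j\<in>J. c j *\<^sub>R u j)) = c i * (v i \<bullet> (G *v u i))"
    if "i \<in> J" for c i
  proof -
    have "v i \<bullet> (G *v (\<Sum>j\<in>J. c j *\<^sub>R u j)) = (\<Sum>j\<in>J. c j * (v i \<bullet> (G *v u j)))"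
      by (simp add: linear_sum[OF matrix_vector_mul_linear] matrix_vector_mult_scaleR inner_sum_right)
    also have "\<dots> = (\<Sum>j\<in>J. if j = i then c i * (v i \<bullet> (G *v u i)) else 0)"
      by (rule sum.cong) (auto simp: orth that)
    finally show ?thesis
      using fin that by simp
  qed
  have product: "(\<Sum>i\<in>J. x i *\<^sub>R R i) *v (G *v ((\<Sum>i\<in>J. y i *\<^sub>R R i) *v z)) =
      (\<Sum>i\<in>J. (x i * y i * (v i \<bullet> z) * (v i \<bullet> (G *v u i))) *\<^sub>R u i)" for x y z
    unfolding R_def sum_outer2_mult_vec
    by (intro sum.cong refl) (simp add: inner mult_ac)
  obtain x where x: "X = (\<Sum>i\<in>J. x i *\<^sub>R R i)"
    using X span_image_eq_sum[OF fin] by blast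
  obtain y where y: "Y = (\<Sum>i\<in>J. y i *\<^sub>R R i)"
    using Y span_image_eq_sum[OF fin] by blast
  show ?thesis
    unfolding matrix_eq matrix_vector_mul_assoc[symmetric] x y product
    by (simp add: mult_ac)
qed

section \<open>No eight rank-one matrices span the slices\<close>

lemma block_kernel_zero:
  fixes d e g x y :: real
  assumes "g * x + e * y = 0" and "d * x + g * y = 0" and "g\<^sup>2 \<noteq> d * e"
  shows "x = 0 \<and> y = 0"
proof -
  have "(g\<^sup>2 - d * e) * x = 0" "(g\<^sup>2 - d * e) * y = 0"
    using assms(1,2) by algebra+
  thus ?thesis
    using assms(3) by simp
qed

lemma slice_mat_mult_vec_eq_0:
  assumes "slice_mat p q r d e g *v x = 0" and "g\<^sup>2 \<noteq> d * e"
  shows "x = 0"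
proof -
  have rows: "(slice_mat p q r d e g *v x) $ k = 0" for k
    using assms(1) by simp
  have "x$0 = 0 \<and> x$1 = 0"
    using rows[of 2] rows[of 3] assms(2) by (intro block_kernel_zero) (simp_all add: slice_mat_mult_vec)
  moreover from this have "x$2 = 0 \<and> x$3 = 0"
    using rows[of 0] rows[of 1] assms(2)
    by (intro block_kernel_zero[of g _ d _ e]) (simp_all add: slice_mat_mult_vec mult.commute)
  ultimately show ?thesis
    by (simp add: vec_eq_iff forall_4')
qed

text \<open>With \<open>A\<^sub>k = [[g\<^sub>k, e\<^sub>k], [d\<^sub>k, g\<^sub>k]]\<close> the hypotheses read \<open>A\<^sub>0 y = A\<^sub>2 z\<close>,
  \<open>A\<^sub>0 w = A\<^sub>1 z\<close>, \<open>A\<^sub>1 y = A\<^sub>2 w\<close>; hence \<open>(A\<^sub>1 adj(A\<^sub>0) A\<^sub>2 - A\<^sub>2 adj(A\<^sub>0) A\<^sub>1) z = 0\<close>, and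
  that matrix has determinant \<open>-\<Delta>\<^sup>2\<close> where \<open>\<Delta> = det [[d\<^sub>k, e\<^sub>k, g\<^sub>k]]\<^sub>k\<close>.\<close>

lemma block_system_zero:
  fixes d0 e0 g0 d1 e1 g1 d2 e2 g2 y1 y2 w1 w2 z1 z2 :: real
  assumes "g0 * y1 + e0 * y2 = g2 * z1 + e2 * z2" and "d0 * y1 + g0 * y2 = d2 * z1 + g2 * z2"
    and "g0 * w1 + e0 * w2 = g1 * z1 + e1 * z2" and "d0 * w1 + g0 * w2 = d1 * z1 + g1 * z2"
    and "g1 * y1 + e1 * y2 = g2 * w1 + e2 * w2" and "d1 * y1 + g1 * y2 = d2 * w1 + g2 * w2"
    and "d0 * (e1 * g2 - g1 * e2) - e0 * (d1 * g2 - g1 * d2) + g0 * (d1 * e2 - e1 * d2) \<noteq> 0"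
  shows "z1 = 0 \<and> z2 = 0"
proof -
  let ?\<Delta> = "d0 * (e1 * g2 - g1 * e2) - e0 * (d1 * g2 - g1 * d2) + g0 * (d1 * e2 - e1 * d2)"
  have "?\<Delta>\<^sup>2 * z1 = 0" "?\<Delta>\<^sup>2 * z2 = 0"
    using assms(1-6) by algebra+
  thus ?thesis
    using assms(7) by simp
qed

lemma slice_mat_triple_kernel:
  fixes p0 q0 r0 d0 e0 g0 p1 q1 r1 d1 e1 g1 p2 q2 r2 d2 e2 g2 :: real and y w z :: "real^4"
  defines "M0 \<equiv> slice_mat p0 q0 r0 d0 e0 g0" and "M1 \<equiv> slice_mat p1 q1 r1 d1 e1 g1"
    and "M2 \<equiv> slice_mat p2 q2 r2 d2 e2 g2"
  assumes "M0 *v y = M2 *v z" and "M0 *v w = M1 *v z" and "M1 *v y = M2 *v w"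
    and nondeg: "g0\<^sup>2 \<noteq> d0 * e0"
    and det: "d0 * (e1 * g2 - g1 * e2) - e0 * (d1 * g2 - g1 * d2) + g0 * (d1 * e2 - e1 * d2) \<noteq> 0"
  shows "z = 0"
proof -
  have "(M0 *v y) $ k = (M2 *v z) $ k" "(M0 *v w) $ k = (M1 *v z) $ k" "(M1 *v y) $ k = (M2 *v w) $ k"
    for k
    using assms(4-6) by simp_all
  note rows = this[of 0, unfolded M0_def M1_def M2_def slice_mat_mult_vec]
    this[of 1, unfolded M0_def M1_def M2_def slice_mat_mult_vec]
    this[of 2, unfolded M0_def M1_def M2_def slice_mat_mult_vec]
    this[of 3, unfolded M0_def M1_def M2_def slice_mat_mult_vec]
  have z01: "z$0 = 0 \<and> z$1 = 0"
    using rows(7-12) det by (intro block_system_zero[of g0 "y$0" e0 "y$1" g2 "z$0" e2 "z$1" d0 d2 "w$0" "w$1" g1 e1 d1])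
  have y01: "y$0 = 0 \<and> y$1 = 0"
    using rows(7,10) z01 nondeg by (intro block_kernel_zero) simp_all
  have w01: "w$0 = 0 \<and> w$1 = 0"
    using rows(8,11) z01 nondeg by (intro block_kernel_zero) simp_all
  have det': "e0 * (d1 * g2 - g1 * d2) - d0 * (e1 * g2 - g1 * e2) + g0 * (e1 * d2 - d1 * e2) \<noteq> 0"
    using det by argo
  have "z$2 = 0 \<and> z$3 = 0"
    using rows(1-6) z01 y01 w01 det'
    by (intro block_system_zero[of g0 "y$2" d0 "y$3" g2 "z$2" d2 "z$3" e0 e2 "w$2" "w$3" g1 d1 e1]) simp_all
  with z01 show ?thesis
    by (simp add: vec_eq_iff forall_4')
qed

lemma exists_orthogonal_to_two:
  fixes a b :: "real^4"
  obtains z where "z \<noteq> 0" and "a \<bullet> z = 0" and "b \<bullet> z = 0"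
proof -
  have "dim {a, b} \<le> card {a, b}"
    by (rule dim_le_card') simp
  also have "\<dots> < DIM(real^4)"
    by (simp add: card_insert_if)
  finally obtain z where "z \<noteq> 0" and "\<And>y. y \<in> span {a, b} \<Longrightarrow> orthogonal z y"
    by (rule orthogonal_to_subspace_exists) blast
  thus thesis
    using that span_base[of a "{a, b}"] span_base[of b "{a, b}"]
    by (simp add: orthogonal_def inner_commute)
qed

text \<open>The heart of the lower bound: for \<open>M\<^sub>1, X\<close> in the span of the \<open>R\<^sub>j\<close>,
  \<open>M\<^sub>1 M\<^sub>0\<^sup>-\<^sup>1 X = X M\<^sub>0\<^sup>-\<^sup>1 M\<^sub>1\<close>; choosing \<open>z \<perp> b\<close> and \<open>M\<^sub>1 z \<perp> M\<^sub>0\<^sup>-\<^sup>T b\<close> removes the extra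
  rank-one term \<open>a b\<^sup>T\<close> of \<open>M\<^sub>2 = X + c a b\<^sup>T\<close> from both sides.\<close>

lemma slice_mat_pencil_not_in_rank_ones:
  fixes u v :: "nat \<Rightarrow> real^4" and a b :: "real^4"
  defines "R \<equiv> \<lambda>i. outer2 (u i) (v i)"
  assumes fin: "finite J" and card: "card J \<le> 4"
    and M0: "slice_mat p0 q0 r0 d0 e0 g0 \<in> span (R ` J)"
    and M1: "slice_mat p1 q1 r1 d1 e1 g1 \<in> span (R ` J)"
    and M2: "slice_mat p2 q2 r2 d2 e2 g2 \<in> span (insert (outer2 a b) (R ` J))"
    and nondeg: "g0\<^sup>2 \<noteq> d0 * e0"
    and det: "d0 * (e1 * g2 - g1 * e2) - e0 * (d1 * g2 - g1 * d2) + g0 * (d1 * e2 - e1 * d2) \<noteq> 0"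
  shows False
proof -
  define N0 N1 N2 where "N0 = slice_mat p0 q0 r0 d0 e0 g0" and "N1 = slice_mat p1 q1 r1 d1 e1 g1"
    and "N2 = slice_mat p2 q2 r2 d2 e2 g2"
  have "inj ((*v) N0)"
  proof (rule injI)
    fix x y assume "N0 *v x = N0 *v y"
    hence "N0 *v (x - y) = 0" by (simp add: matrix_vector_mult_diff_distrib)
    thus "x = y" using slice_mat_mult_vec_eq_0 nondeg unfolding N0_def by fastforce
  qed
  then obtain G where G: "G ** N0 = mat 1"
    using matrix_left_invertible_injective by blast
  have "N0 ** G = mat 1"
    using G matrix_left_right_inverse by blast
  hence N0_G: "N0 *v (G *v y) = y" for y
    by (simp add: matrix_vector_mul_assoc)
  obtain c where X: "N2 - c *\<^sub>R outer2 a b \<in> span (R ` J)"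
    using M2 span_breakdown_eq N2_def by blast
  define X where "X = N2 - c *\<^sub>R outer2 a b"
  have comm: "N1 ** G ** X = X ** G ** N1"
    using rank_one_span_commute[OF fin card M0[folded N0_def, unfolded R_def] G] M1 X
    by (simp add: N1_def X_def R_def)
  obtain z where "z \<noteq> 0" and bz: "b \<bullet> z = 0" and bGz: "(b v* (G ** N1)) \<bullet> z = 0"
    by (rule exists_orthogonal_to_two)
  define y w where "y = G *v (N2 *v z)" and "w = G *v (N1 *v z)"
  have N2_apply: "N2 *v t = X *v t + (c * (b \<bullet> t)) *\<^sub>R a" for t
    by (simp add: X_def matrix_vector_mult_diff_rdistrib scaleR_outer2 outer2_mult_vec mult.commute)
  have bw: "b \<bullet> w = 0"
    using bGz by (simp add: w_def dot_lmul_matrix matrix_vector_mul_assoc[symmetric])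
  have "N1 *v y = N1 *v (G *v (X *v z))"
    by (simp add: y_def N2_apply bz)
  also have "\<dots> = X *v (G *v (N1 *v z))"
    by (metis comm matrix_vector_mul_assoc)
  also have "\<dots> = N2 *v w"
    using bw by (simp add: N2_apply w_def)
  finally have "N1 *v y = N2 *v w" .
  moreover have "N0 *v y = N2 *v z" "N0 *v w = N1 *v z"
    by (simp_all add: y_def w_def N0_G)
  ultimately have "z = 0"
    using nondeg det unfolding N0_def N1_def N2_def by (intro slice_mat_triple_kernel)
  with \<open>z \<noteq> 0\<close> show False ..
qed

lemma span_upper_block:
  assumes "s \<in> span {slice_mat 1 0 0 0 0 0, slice_mat 0 1 0 0 0 0, slice_mat 0 0 1 0 0 0}"
  obtains p q r where "s = slice_mat p q r 0 0 0"
proof -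
  obtain p q r where "s - p *\<^sub>R slice_mat 1 0 0 0 0 0 - q *\<^sub>R slice_mat 0 1 0 0 0 0
      - r *\<^sub>R slice_mat 0 0 1 0 0 0 = 0"
    using assms by (auto simp: span_breakdown_eq algebra_simps)
  hence "s = slice_mat p q r 0 0 0"
    by (simp add: scaleR_slice_mat slice_mat_add algebra_simps)
  thus thesis by (rule that)
qed

lemma independent_upper_block:
  "independent {slice_mat 1 0 0 0 0 0, slice_mat 0 1 0 0 0 0, slice_mat 0 0 1 0 0 0}"
  by (simp add: independent_insert span_breakdown_eq scaleR_slice_mat slice_mat_diff slice_mat_eq_0_iff)

lemma slice_mats_exchange_upper_block:
  assumes fin: "finite K" and sub: "slice_mats \<subseteq> span (f ` K)"
  obtains I where "I \<subseteq> K" and "card I + 3 \<le> card K"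
    and "\<And>d e g. \<exists>p q r. slice_mat p q r d e g \<in> span (f ` I)"
proof -
  let ?U = "{slice_mat 1 0 0 0 0 0, slice_mat 0 1 0 0 0 0, slice_mat 0 0 1 0 0 0}"
  have "?U \<subseteq> span (f ` K)"
    using sub slice_mat_in_slice_mats by blast
  from span_exchange_independent[OF fin _ independent_upper_block this]
  obtain I where I: "I \<subseteq> K" "card I + card ?U \<le> card K"
      and exchanged: "span (f ` K) \<subseteq> span (?U \<union> f ` I)"
    by auto
  have "card ?U = 3"
    by (simp add: slice_mat_inject)
  moreover have "\<exists>p q r. slice_mat p q r d e g \<in> span (f ` I)" for d e g
  proof -
    have "slice_mat 0 0 0 d e g \<in> span (?U \<union> f ` I)"
      using sub exchanged slice_mat_in_slice_mats by blast
    then obtain s y where s: "s \<in> span ?U" and y: "y \<in> span (f ` I)"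
      and sy: "slice_mat 0 0 0 d e g = s + y"
      using span_Un[of ?U "f ` I"] by blast
    obtain p q r where "s = slice_mat p q r 0 0 0"
      using span_upper_block[OF s] .
    with sy have "y = slice_mat 0 0 0 d e g - slice_mat p q r 0 0 0"
      by simp
    hence "y = slice_mat (- p) (- q) (- r) d e g"
      by (simp add: slice_mat_diff)
    thus ?thesis
      using y by blast
  qed
  ultimately show thesis
    using I(1,2) by (intro that) auto
qed

lemma span_image_split_one:
  assumes "finite I" and "card I \<le> Suc n"
  obtains i J where "finite J" and "card J \<le> n" and "span (f ` I) \<subseteq> span (insert (f i) (f ` J))"
proof (cases "I = {}")
  case True
  thus thesis
    by (intro that[of "{}" undefined]) (simp_all add: span_zero)
next
  case False
  then obtain i where i: "i \<in> I"
    by blast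
  have "card (I - {i}) \<le> n"
    using assms i by (simp add: card_Diff_singleton)
  moreover have "f ` I \<subseteq> insert (f i) (f ` (I - {i}))"
    by blast
  ultimately show thesis
    using assms(1) by (intro that[of "I - {i}" i]) (simp_all add: span_mono)
qed

lemma span_combination_cancel:
  assumes "A - l1 *\<^sub>R Q \<in> span S" and "B - l2 *\<^sub>R Q \<in> span S" and "C - l3 *\<^sub>R Q \<in> span S"
    and "t1 * l1 + t2 * l2 + t3 * l3 = 0"
  shows "t1 *\<^sub>R A + t2 *\<^sub>R B + t3 *\<^sub>R C \<in> span S"
proof -
  have "t1 *\<^sub>R (A - l1 *\<^sub>R Q) + t2 *\<^sub>R (B - l2 *\<^sub>R Q) + t3 *\<^sub>R (C - l3 *\<^sub>R Q) \<in> span S"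
    using assms(1-3) by (intro span_add span_scale)
  also have "t1 *\<^sub>R (A - l1 *\<^sub>R Q) + t2 *\<^sub>R (B - l2 *\<^sub>R Q) + t3 *\<^sub>R (C - l3 *\<^sub>R Q) =
      t1 *\<^sub>R A + t2 *\<^sub>R B + t3 *\<^sub>R C - (t1 * l1 + t2 * l2 + t3 * l3) *\<^sub>R Q"
    by (simp add: algebra_simps)
  finally show ?thesis
    using assms(4) by simp
qed

lemma slice_mats_not_in_rank_ones_plus_one:
  fixes u v :: "nat \<Rightarrow> real^4" and a b :: "real^4"
  assumes fin: "finite J" and card: "card J \<le> 4"
    and off_block: "\<And>d e g. \<exists>p q r.
      slice_mat p q r d e g \<in> span (insert (outer2 a b) ((\<lambda>i. outer2 (u i) (v i)) ` J))"
  shows False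
proof -
  let ?S = "span ((\<lambda>i. outer2 (u i) (v i)) ` J)"
  let ?S' = "span (insert (outer2 a b) ((\<lambda>i. outer2 (u i) (v i)) ` J))"
  have split: "\<exists>p q r l. slice_mat p q r d e g \<in> ?S' \<and> slice_mat p q r d e g - l *\<^sub>R outer2 a b \<in> ?S"
    for d e g
    using off_block[of d e g] span_breakdown_eq by blast
  obtain p1 q1 r1 l1 where N1: "slice_mat p1 q1 r1 1 0 0 \<in> ?S'"
      "slice_mat p1 q1 r1 1 0 0 - l1 *\<^sub>R outer2 a b \<in> ?S"
    using split by blast
  obtain p2 q2 r2 l2 where N2: "slice_mat p2 q2 r2 0 1 0 \<in> ?S'"
      "slice_mat p2 q2 r2 0 1 0 - l2 *\<^sub>R outer2 a b \<in> ?S"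
    using split by blast
  obtain p3 q3 r3 l3 where N3: "slice_mat p3 q3 r3 0 0 1 \<in> ?S'"
      "slice_mat p3 q3 r3 0 0 1 - l3 *\<^sub>R outer2 a b \<in> ?S"
    using split by blast
  have comb: "slice_mat (t1 * p1 + t2 * p2 + t3 * p3) (t1 * q1 + t2 * q2 + t3 * q3)
      (t1 * r1 + t2 * r2 + t3 * r3) t1 t2 t3 \<in> ?S"
    if "t1 * l1 + t2 * l2 + t3 * l3 = 0" for t1 t2 t3
    using span_combination_cancel[OF N1(2) N2(2) N3(2) that]
    by (simp add: scaleR_slice_mat slice_mat_add)
  note pencil = slice_mat_pencil_not_in_rank_ones[OF fin card]
  \<comment> \<open>In each case two combinations free of \<open>a b\<^sup>T\<close> give \<open>M\<^sub>0\<close> (with \<open>g\<^sup>2 \<noteq> d e\<close>) and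
    \<open>M\<^sub>1\<close>, and one of the \<open>N\<^sub>k\<close> completes them to a triple with \<open>\<Delta> \<noteq> 0\<close>.\<close>
  consider "l1 \<noteq> 0" | "l1 = 0" "l2 \<noteq> 0" | "l1 = 0" "l2 = 0"
    by blast
  thus False
  proof cases
    case 1
    show False
      by (rule pencil[OF comb[of "- l3" 0 l1] comb[of "- l2" l1 0] N1(1)]) (use 1 in simp_all)
  next
    case 2
    show False
      by (rule pencil[OF comb[of 0 "- l3" l2] comb[of 1 0 0] N2(1)]) (use 2 in simp_all)
  next
    case 3
    show False
      by (rule pencil[OF comb[of 1 1 0] comb[of 1 "- 1" 0] N3(1)]) (use 3 in simp_all)
  qed
qed

lemma slice_mats_not_in_span_8:
  fixes u v :: "nat \<Rightarrow> real^4"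
  shows "\<not> slice_mats \<subseteq> span ((\<lambda>i. outer2 (u i) (v i)) ` {..<8})"
proof
  let ?R = "\<lambda>i. outer2 (u i) (v i)"
  assume "slice_mats \<subseteq> span (?R ` {..<8})"
  then obtain I where I: "I \<subseteq> {..<8}" "card I + 3 \<le> card {..<8::nat}"
    and off_block: "\<And>d e g. \<exists>p q r. slice_mat p q r d e g \<in> span (?R ` I)"
    by (rule slice_mats_exchange_upper_block[OF finite_lessThan]) blast+
  have "finite I" "card I \<le> Suc 4"
    using I finite_subset by auto
  then obtain i J where J: "finite J" "card J \<le> 4" "span (?R ` I) \<subseteq> span (insert (?R i) (?R ` J))"
    by (rule span_image_split_one)
  show False
    using off_block J(3)
    by (intro slice_mats_not_in_rank_ones_plus_one[OF J(1,2), where a = "u i" and b = "v i" and u = u and v = v])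
      blast
qed

section \<open>The decomposition ranks\<close>

lemma not_in_span_rank_ones_mono:
  fixes r s :: nat
  assumes "\<And>u v. \<not> L \<subseteq> span ((\<lambda>i. outer2 (u i) (v i)) ` {..<r})" and "s \<le> r"
  shows "\<not> L \<subseteq> span ((\<lambda>i. outer2 (u i) (v i)) ` {..<s})"
proof
  assume "L \<subseteq> span ((\<lambda>i. outer2 (u i) (v i)) ` {..<s})"
  also have "\<dots> \<subseteq> span ((\<lambda>i. outer2 (u i) (v i)) ` {..<r})"
    using assms(2) by (intro span_mono image_mono) auto
  finally show False
    using assms(1) by blast
qed

lemma drk2_eqI:
  assumes upper: "slice_space2 T \<subseteq> span ((\<lambda>i. outer2 (u i) (v i)) ` {..<Suc r})"
    and lower: "\<And>u v. \<not> slice_space2 T \<subseteq> span ((\<lambda>i. outer2 (u i) (v i)) ` {..<r})"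
  shows "drk2 T = Suc r"
  unfolding drk2_def
proof (rule Least_equality)
  show "\<exists>u v. slice_space2 T \<subseteq> span ((\<lambda>i. outer2 (u i) (v i)) ` {..<Suc r})"
    using upper by blast
next
  fix s assume "\<exists>u v :: nat \<Rightarrow> real^4. slice_space2 T \<subseteq> span ((\<lambda>i. outer2 (u i) (v i)) ` {..<s})"
  thus "Suc r \<le> s"
    using not_in_span_rank_ones_mono[OF lower] by (meson not_less_eq_eq)
qed

lemma sdrk2_eqI:
  assumes upper: "slice_space2 T \<subseteq> span ((\<lambda>i. c i *\<^sub>R outer2 (v i) (v i)) ` {..<Suc r})"
    and lower: "\<And>u v. \<not> slice_space2 T \<subseteq> span ((\<lambda>i. outer2 (u i) (v i)) ` {..<r})"
  shows "sdrk2 T = Suc r"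
  unfolding sdrk2_def
proof (rule Least_equality)
  show "\<exists>c v. slice_space2 T \<subseteq> span ((\<lambda>i. c i *\<^sub>R outer2 (v i) (v i)) ` {..<Suc r})"
    using upper by blast
next
  fix s assume "\<exists>(c :: nat \<Rightarrow> real) (v :: nat \<Rightarrow> real^4).
      slice_space2 T \<subseteq> span ((\<lambda>i. c i *\<^sub>R outer2 (v i) (v i)) ` {..<s})"
  then obtain c and v :: "nat \<Rightarrow> real^4"
    where "slice_space2 T \<subseteq> span ((\<lambda>i. outer2 (c i *\<^sub>R v i) (v i)) ` {..<s})"
    by (auto simp: scaleR_outer2)
  thus "Suc r \<le> s"
    using not_in_span_rank_ones_mono[OF lower] by (meson not_less_eq_eq)
qed

theorem proposition3p6:
  fixes T :: tensor4
  assumes "symmetric4 T"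
    and "\<forall>x :: real^4. tensor_poly4 T x =
           (x$0)^4 - 3 * (x$1)^4 + 12 * (x$0)^2 * (x$1) * (x$2) + 12 * (x$0) * (x$1)^2 * (x$3)"
  shows "drk2 T = 9 \<and> sdrk2 T = 9"
proof -
  have "T = quartic_tensor"
    by (rule symmetric4_eqI[OF assms(1) symmetric4_quartic_tensor])
      (metis assms(2) tensor_poly4_quartic_tensor)
  hence slices: "slice_space2 T = slice_mats"
    by (simp add: slice_space2_quartic_tensor)
  have upper: "slice_space2 T \<subseteq> span ((\<lambda>i. outer2 (square_vec i) (square_vec i)) ` {..<Suc 8})"
    using slice_mats_subset_span_squares by (simp add: slices numeral_eq_Suc)
  have lower: "\<not> slice_space2 T \<subseteq> span ((\<lambda>i. outer2 (u i) (v i)) ` {..<8})"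
    for u v :: "nat \<Rightarrow> real^4"
    by (simp add: slices slice_mats_not_in_span_8)
  have "drk2 T = Suc 8"
    by (rule drk2_eqI[OF upper lower])
  moreover have "sdrk2 T = Suc 8"
    by (rule sdrk2_eqI[of _ "\<lambda>_. 1", OF _ lower]) (use upper in simp)
  ultimately show ?thesis
    by simp
qed

end
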